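(* Let $N\ge2$ and $t>0$, and define, for $\boldsymbol{v}\in\mathbb{R}^N$ with pairwise distinct components, $$F_N(\boldsymbol{v},t)=\frac N2(N-1)(1-\log t)-\sum_{j=1}^Nj\log j+2\log|h_N(\boldsymbol{v})|-\frac{|\boldsymbol{v}|^2}{2t},\qquad h_N(\boldsymbol{v})=\prod_{1\le i<j\le N}(v_j-v_i).$$ Then the maximum value of $F_N(\cdot,t)$ is zero; in particular $F_N(\sqrt{2t}\,\rho\boldsymbol{z}_N,t)=0$ for every $\rho\in S_N$, where $\boldsymbol{z}_N$ is the vector of roots of the $N$-th Hermite polynomial $H_N(x)=(-1)^Ne^{x^2}\frac{d^N}{dx^N}e^{-x^2}$ and $\rho\boldsymbol{z}_N=(z_{\rho(1),N},\dots,z_{\rho(N),N})$. *)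

theory Defs
  imports "HOL-Analysis.Analysis" "HOL-Combinatorics.Permutations"
begin

definition hermite :: "nat \<Rightarrow> real \<Rightarrow> real" where
  "hermite N x = (-1) ^ N * exp (x\<^sup>2) * ((deriv ^^ N) (\<lambda>y. exp (- y\<^sup>2)) x)"

text \<open>Vectors in R^N are functions nat => real indexed by {1..N}.\<close>
definition hN :: "nat \<Rightarrow> (nat \<Rightarrow> real) \<Rightarrow> real" where
  "hN N v = (\<Prod>j\<in>{1..N}. \<Prod>i\<in>{1..<j}. v j - v i)"

definition FN :: "nat \<Rightarrow> (nat \<Rightarrow> real) \<Rightarrow> real \<Rightarrow> real" where
  "FN N v t = real N / 2 * (real N - 1) * (1 - ln t)
     - (\<Sum>j=1..N. real j * ln (real j))
     + 2 * ln \<bar>hN N v\<bar>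
     - (\<Sum>j=1..N. (v j)\<^sup>2) / (2 * t)"

end

theory Submission
  imports Defs "HOL-Computational_Algebra.Polynomial"
begin

text \<open>
  Up to constants, \<open>F\<^sub>N(v, t)\<close> is \<open>L(v) - |v|\<^sup>2 / (2t)\<close> with
  \<open>L(v) = \<Sum>\<^sub>a\<^sub>\<noteq>\<^sub>b ln |v\<^sub>a - v\<^sub>b| = 2 ln |h\<^sub>N(v)|\<close>. On each ordering chamber this function is
  concave, so it is bounded by its value at a critical point of the chamber, i.e. at a Stieltjes
  equilibrium \<open>\<Sum>\<^sub>b\<^sub>\<noteq>\<^sub>a 1 / (w\<^sub>a - w\<^sub>b) = w\<^sub>a / (2t)\<close>. By Stieltjes, \<open>\<surd>(2t)\<close> times the roots of
  \<open>H\<^sub>N\<close>, in any order, is such an equilibrium: evaluating \<open>H'' = 2xH' - 2NH\<close> at a root gives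
  the equilibrium relation. Every chamber contains one of these points because \<open>H\<^sub>N\<close> has \<open>N\<close>
  distinct real roots (interlacing induction). At these points \<open>|w|\<^sup>2\<close> follows from the
  equilibrium relation and \<open>L\<close> is the logarithm of the discriminant of \<open>H\<^sub>N\<close>, computed from the
  resultant identity \<open>\<Prod>\<^sub>a |H\<^sub>N\<^sub>-\<^sub>1(z\<^sub>a)| = \<Prod>\<^sub>m\<^sub><\<^sub>N (2m)\<^sup>m\<close>; the value is exactly \<open>0\<close>.
\<close>

fun hermite_poly :: "nat \<Rightarrow> real poly" where
  "hermite_poly 0 = 1"
| "hermite_poly (Suc 0) = [:0, 2:]"
| "hermite_poly (Suc (Suc n)) =
     [:0, 2:] * hermite_poly (Suc n) - smult (2 * (real n + 1)) (hermite_poly n)"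

lemmas hermite_poly_Suc_Suc = hermite_poly.simps(3)
declare hermite_poly_Suc_Suc [simp del]

lemma poly_hermite_poly_Suc_Suc:
  "poly (hermite_poly (Suc (Suc n))) x =
     2 * x * poly (hermite_poly (Suc n)) x - 2 * (real n + 1) * poly (hermite_poly n) x"
  by (simp add: hermite_poly_Suc_Suc)

lemma pderiv_hermite_poly:
  "pderiv (hermite_poly (Suc n)) = smult (2 * (real n + 1)) (hermite_poly n)"
proof (induction n rule: hermite_poly.induct)
  case 1
  show ?case
    by (simp add: pderiv_pCons)
next
  case 2
  show ?case
    by (simp add: hermite_poly_Suc_Suc pderiv_mult pderiv_pCons pderiv_diff)
next
  case (3 n)
  have "pderiv (hermite_poly (Suc (Suc (Suc n)))) =
      [:0, 2:] * smult (2 * (real n + 2)) (hermite_poly (Suc n)) + smult 2 (hermite_poly (Suc (Suc n)))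
      - smult (2 * (real n + 2)) (smult (2 * (real n + 1)) (hermite_poly n))"
    using 3 by (simp add: hermite_poly_Suc_Suc[of "Suc n"] pderiv_mult pderiv_diff pderiv_smult
        pderiv_pCons algebra_simps)
  also have "\<dots> = smult (2 * (real (Suc (Suc n)) + 1)) (hermite_poly (Suc (Suc n)))"
    by (simp add: hermite_poly_Suc_Suc[of n] poly_eq_poly_eq_iff[symmetric] fun_eq_iff algebra_simps)
  finally show ?case .
qed

lemma poly_hermite_poly_Suc:
  "poly (hermite_poly (Suc n)) x = 2 * x * poly (hermite_poly n) x - poly (pderiv (hermite_poly n)) x"
  by (cases n) (simp_all add: poly_hermite_poly_Suc_Suc pderiv_hermite_poly)

lemma hermite_poly_ode:
  "poly (pderiv (pderiv (hermite_poly n))) x =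
     2 * x * poly (pderiv (hermite_poly n)) x - 2 * real n * poly (hermite_poly n) x"
proof (cases n)
  case (Suc m)
  then show ?thesis
    by (cases m) (simp_all add: pderiv_pCons pderiv_hermite_poly pderiv_smult
        poly_hermite_poly_Suc_Suc algebra_simps)
qed simp

lemma degree_le_and_top_coeff_hermite_poly:
  "degree (hermite_poly n) \<le> n \<and> coeff (hermite_poly n) n = 2 ^ n"
proof (induction n rule: hermite_poly.induct)
  case (3 n)
  have shift: "[:0, 2:] * p = pCons 0 (smult 2 p)" for p :: "real poly"
    by simp
  have "degree (pCons 0 (smult 2 (hermite_poly (Suc n)))) \<le> Suc (Suc n)"
    using 3 by simp
  moreover have "degree (smult (2 * (real n + 1)) (hermite_poly n)) \<le> Suc (Suc n)"
    using 3 by (meson degree_smult_le le_SucI order_trans)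
  ultimately show ?case
    using 3 by (simp add: hermite_poly_Suc_Suc shift coeff_eq_0 degree_diff_le)
qed simp_all

lemma degree_hermite_poly [simp]: "degree (hermite_poly n) = n"
  using degree_le_and_top_coeff_hermite_poly[of n] le_degree[of "hermite_poly n" n] by simp

lemma lead_coeff_hermite_poly: "lead_coeff (hermite_poly n) = 2 ^ n"
  using degree_le_and_top_coeff_hermite_poly[of n] by simp

lemma higher_deriv_gaussian:
  "(deriv ^^ n) (\<lambda>y. exp (- y\<^sup>2)) = (\<lambda>x. (-1) ^ n * poly (hermite_poly n) x * exp (- x\<^sup>2))"
proof (induction n)
  case (Suc n)
  have "((\<lambda>x. (-1) ^ n * poly (hermite_poly n) x * exp (- x\<^sup>2)) has_real_derivative
      (-1) ^ Suc n * poly (hermite_poly (Suc n)) x * exp (- x\<^sup>2)) (at x)" for x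
    by (auto intro!: derivative_eq_intros poly_DERIV[THEN DERIV_chain2]
        simp: poly_hermite_poly_Suc algebra_simps)
  then show ?case
    using Suc.IH by (auto intro!: DERIV_imp_deriv)
qed simp

lemma hermite_eq_poly_hermite_poly: "hermite n x = poly (hermite_poly n) x"
proof -
  have "(-1 :: real) ^ n * (-1) ^ n = 1"
    by (simp flip: power_mult_distrib)
  moreover have "exp (x\<^sup>2) * exp (- x\<^sup>2) = 1"
    by (simp flip: exp_add)
  ultimately show ?thesis
    unfolding hermite_def higher_deriv_gaussian
    by (metis (no_types, lifting) mult.assoc mult.commute mult.left_commute mult_1)
qed

lemma poly_eq_smult_prod_linear:
  fixes p :: "'a::idom poly"
  assumes "finite I" "inj_on z I" "\<forall>i\<in>I. poly p (z i) = 0" "degree p = card I"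
  shows "p = smult (lead_coeff p) (\<Prod>i\<in>I. [:- z i, 1:])"
  using assms
proof (induction I arbitrary: p rule: finite_induct)
  case empty
  then show ?case
    by (metis card.empty degree_0_id prod.empty smult_one)
next
  case (insert i I)
  obtain q where q: "p = [:- z i, 1:] * q"
    using insert.prems(2) by (metis dvdE insertI1 poly_eq_0_iff_dvd)
  have "q \<noteq> 0"
    using insert.prems(3) insert.hyps q by auto
  then have "degree p = Suc (degree q)"
    unfolding q by (subst degree_mult_eq) auto
  then have "degree q = card I"
    using insert.prems(3) insert.hyps by simp
  moreover have "\<forall>j\<in>I. poly q (z j) = 0"
    using insert.prems(1,2) insert.hyps unfolding q by (auto simp: inj_on_def)
  ultimately have "q = smult (lead_coeff q) (\<Prod>j\<in>I. [:- z j, 1:])"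
    using insert.IH insert.prems(1) by (meson inj_on_insert)
  moreover have "lead_coeff p = lead_coeff q"
    unfolding q by (simp only: lead_coeff_mult) simp
  ultimately show ?case
    using insert.hyps q by (metis mult_smult_right prod.insert)
qed

lemma poly_sign_at_bot:
  fixes p :: "real poly"
  assumes "lead_coeff p > 0"
  shows "\<exists>M. \<forall>x\<le>M. (-1) ^ degree p * poly p x > 0"
proof -
  define q where "q = smult ((-1) ^ degree p) (p \<circ>\<^sub>p [:0, -1:])"
  have "lead_coeff q = lead_coeff p"
    by (simp add: q_def lead_coeff_comp flip: power_mult_distrib)
  then obtain M where "\<forall>x\<ge>M. poly q x \<ge> lead_coeff p"
    using poly_pinfty_gt_lc[of q] assms by auto
  moreover have "poly q (- x) = (-1) ^ degree p * poly p x" for x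
    by (simp add: q_def poly_pcompose)
  ultimately have "(-1) ^ degree p * poly p x > 0" if "x \<le> - M" for x
    using that assms by (metis le_minus_iff less_le_trans)
  then show ?thesis
    by blast
qed

lemma alternating_signs_mult_neg:
  fixes a b :: real
  assumes "(-1) ^ Suc e * a > 0" "(-1) ^ e * b > 0"
  shows "a * b < 0"
  using assms by (cases "even e") (auto simp: mult_pos_neg mult_neg_pos zero_less_mult_iff)

lemma sign_prod_diff_in_gap:
  fixes x :: "nat \<Rightarrow> real"
  assumes mono: "strict_mono_on {1..n} x" and k: "k \<in> {1..Suc n}"
    and below: "2 \<le> k \<Longrightarrow> x (k - 1) < y" and above: "k \<le> n \<Longrightarrow> y < x k"
  shows "(-1) ^ (Suc n - k) * (\<Prod>j\<in>{1..n}. y - x j) > 0"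
proof -
  have split: "{1..n} = {1..<k} \<union> {k..n}"
    using k by auto
  have "(\<Prod>j\<in>{1..<k}. y - x j) > 0"
  proof (rule prod_pos)
    fix j assume "j \<in> {1..<k}"
    then show "y - x j > 0"
      using below k strict_mono_on_leD[OF mono, of j "k - 1"] by fastforce
  qed
  moreover have "(\<Prod>j\<in>{k..n}. x j - y) > 0"
  proof (rule prod_pos)
    fix j assume "j \<in> {k..n}"
    then show "x j - y > 0"
      using above k strict_mono_on_leD[OF mono, of k j] by fastforce
  qed
  moreover have "(\<Prod>j\<in>{k..n}. y - x j) = (-1) ^ (Suc n - k) * (\<Prod>j\<in>{k..n}. x j - y)"
    (is "_ = ?s * _")
  proof -
    have "(\<Prod>j\<in>{k..n}. y - x j) = (\<Prod>j\<in>{k..n}. (-1) * (x j - y))"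
      by simp
    also have "\<dots> = (-1) ^ card {k..n} * (\<Prod>j\<in>{k..n}. x j - y)"
      by (simp only: prod.distrib prod_constant)
    finally show ?thesis
      by simp
  qed
  moreover have "(\<Prod>j\<in>{1..n}. y - x j) = (\<Prod>j\<in>{1..<k}. y - x j) * (\<Prod>j\<in>{k..n}. y - x j)"
    unfolding split by (rule prod.union_disjoint) auto
  moreover have "?s * ?s = 1"
    by (simp flip: power_mult_distrib)
  ultimately show ?thesis
    by (simp add: mult.left_commute[of ?s])
qed

lemma interlacing_roots:
  fixes p :: "real poly" and x :: "nat \<Rightarrow> real"
  assumes "1 \<le> n" and mono: "strict_mono_on {1..n} x"
    and deg: "degree p = Suc n" and lc: "lead_coeff p > 0"
    and signs: "\<forall>k\<in>{1..n}. (-1) ^ (Suc n - k) * poly p (x k) > 0"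
  obtains y where "strict_mono_on {1..Suc n} y" "\<forall>k\<in>{1..Suc n}. poly p (y k) = 0"
    "\<forall>k\<in>{1..Suc n}. (2 \<le> k \<longrightarrow> x (k - 1) < y k) \<and> (k \<le> n \<longrightarrow> y k < x k)"
proof -
  have "\<exists>r. x (k - 1) < r \<and> r < x k \<and> poly p r = 0" if k: "k \<in> {2..n}" for k
  proof -
    have "(-1) ^ Suc (Suc n - k) * poly p (x (k - 1)) > 0"
      using signs k by (auto simp: Suc_diff_le elim!: ballE[of _ _ "k - 1"])
    moreover have "(-1) ^ (Suc n - k) * poly p (x k) > 0"
      using signs k by auto
    ultimately have "poly p (x (k - 1)) * poly p (x k) < 0"
      by (rule alternating_signs_mult_neg)
    moreover have "x (k - 1) < x k"
      using k by (intro strict_mono_onD[OF mono]) auto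
    ultimately show ?thesis
      using poly_IVT by blast
  qed
  then obtain r where r: "\<forall>k\<in>{2..n}. x (k - 1) < r k \<and> r k < x k \<and> poly p (r k) = 0"
    by metis
  obtain b where b: "x n < b" "poly p b = 0"
  proof -
    obtain M where M: "\<forall>z\<ge>M. poly p z \<ge> lead_coeff p"
      using poly_pinfty_gt_lc[OF lc] by blast
    have "poly p (max M (x n + 1)) > 0"
      using M lc by (meson max.cobounded1 less_le_trans)
    moreover have "poly p (x n) < 0"
      using signs \<open>1 \<le> n\<close> by (auto elim!: ballE[of _ _ n])
    ultimately show ?thesis
      using poly_IVT_pos[of "x n" "max M (x n + 1)" p] that by force
  qed
  obtain a where a: "a < x 1" "poly p a = 0"
  proof -
    obtain M where M: "\<forall>z\<le>M. (-1) ^ Suc n * poly p z > 0"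
      using poly_sign_at_bot[OF lc] deg by auto
    have "(-1) ^ Suc n * poly p (min M (x 1 - 1)) > 0"
      using M by simp
    moreover have "(-1) ^ n * poly p (x 1) > 0"
      using signs \<open>1 \<le> n\<close> by (auto elim!: ballE[of _ _ 1])
    ultimately have "poly p (min M (x 1 - 1)) * poly p (x 1) < 0"
      by (rule alternating_signs_mult_neg)
    then show ?thesis
      using poly_IVT[of "min M (x 1 - 1)" "x 1" p] that by force
  qed
  define y where "y k = (if k = 1 then a else if k = Suc n then b else r k)" for k
  have y: "(2 \<le> k \<longrightarrow> x (k - 1) < y k) \<and> (k \<le> n \<longrightarrow> y k < x k) \<and> poly p (y k) = 0"
    if "k \<in> {1..Suc n}" for k
    using that a b r \<open>1 \<le> n\<close> by (auto simp: y_def)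
  have "strict_mono_on {1..Suc n} y"
  proof (rule strict_mono_onI)
    fix k l assume k: "k \<in> {1..Suc n}" and l: "l \<in> {1..Suc n}" and "k < l"
    then have "y k < x k" "x (l - 1) < y l"
      using y[OF k] y[OF l] by auto
    moreover have "x k \<le> x (l - 1)"
      using k l \<open>k < l\<close> by (intro strict_mono_on_leD[OF mono]) auto
    ultimately show "y k < y l"
      by linarith
  qed
  with y show ?thesis
    using that by blast
qed

lemma inj_on_scale:
  fixes s :: "'b::field"
  assumes "inj_on u I" "s \<noteq> 0"
  shows "inj_on (\<lambda>i. s * u i) I"
  using comp_inj_on[OF assms(1) inj_on_mult[OF assms(2)]] by (simp add: o_def)

definition hermite_roots :: "nat \<Rightarrow> 'a set \<Rightarrow> ('a \<Rightarrow> real) \<Rightarrow> bool" where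
  "hermite_roots n I u \<longleftrightarrow>
     finite I \<and> card I = n \<and> inj_on u I \<and> (\<forall>i\<in>I. poly (hermite_poly n) (u i) = 0)"

lemma hermite_poly_eq_prod:
  "hermite_roots n I u \<Longrightarrow> hermite_poly n = smult (2 ^ n) (\<Prod>i\<in>I. [:- u i, 1:])"
  using poly_eq_smult_prod_linear[of I u "hermite_poly n"] lead_coeff_hermite_poly[of n]
  by (simp add: hermite_roots_def)

lemma poly_hermite_poly_eq_prod:
  "hermite_roots n I u \<Longrightarrow> poly (hermite_poly n) x = 2 ^ n * (\<Prod>i\<in>I. x - u i)"
  by (simp add: hermite_poly_eq_prod poly_prod)

lemma hermite_roots_permute:
  "hermite_roots n I u \<Longrightarrow> \<sigma> permutes I \<Longrightarrow> hermite_roots n I (u \<circ> \<sigma>)"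
  unfolding hermite_roots_def
  by (auto simp: permutes_in_image permutes_image permutes_inj_on intro: comp_inj_on)

text \<open>The sign condition says that the roots of \<open>H\<^sub>n\<^sub>-\<^sub>1\<close> interlace those of \<open>H\<^sub>n\<close>;
  it is the invariant that lets the induction produce the next set of roots.\<close>
lemma hermite_roots_exist:
  assumes "1 \<le> n"
  shows "\<exists>x. strict_mono_on {1..n} x \<and> hermite_roots n {1..n} x
           \<and> (\<forall>k\<in>{1..n}. (-1) ^ (n - k) * poly (hermite_poly (n - 1)) (x k) > 0)"
  using assms
proof (induction n rule: nat_induct_at_least)
  case base
  show ?case
    by (rule exI[of _ "\<lambda>_. 0"]) (simp add: strict_mono_on_def hermite_roots_def)
next
  case (Suc n)
  then obtain x where mono: "strict_mono_on {1..n} x" and roots: "hermite_roots n {1..n} x"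
    and signs: "\<forall>k\<in>{1..n}. (-1) ^ (n - k) * poly (hermite_poly (n - 1)) (x k) > 0"
    by blast
  have "\<forall>k\<in>{1..n}. (-1) ^ (Suc n - k) * poly (hermite_poly (Suc n)) (x k) > 0"
  proof
    fix k assume k: "k \<in> {1..n}"
    obtain m where n: "n = Suc m"
      using Suc.hyps by (cases n) auto
    have "poly (hermite_poly n) (x k) = 0"
      using roots k by (simp add: hermite_roots_def)
    then have "(-1) ^ (Suc n - k) * poly (hermite_poly (Suc n)) (x k)
        = 2 * real n * ((-1) ^ (n - k) * poly (hermite_poly (n - 1)) (x k))"
      using k by (simp add: n poly_hermite_poly_Suc_Suc Suc_diff_le)
    then show "(-1) ^ (Suc n - k) * poly (hermite_poly (Suc n)) (x k) > 0"
      using signs k Suc.hyps by simp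
  qed
  then obtain y where mono': "strict_mono_on {1..Suc n} y"
    and roots': "\<forall>k\<in>{1..Suc n}. poly (hermite_poly (Suc n)) (y k) = 0"
    and gaps: "\<forall>k\<in>{1..Suc n}. (2 \<le> k \<longrightarrow> x (k - 1) < y k) \<and> (k \<le> n \<longrightarrow> y k < x k)"
    using interlacing_roots[OF Suc.hyps mono, of "hermite_poly (Suc n)"]
      lead_coeff_hermite_poly[of "Suc n"] by auto
  have "(-1) ^ (Suc n - k) * poly (hermite_poly n) (y k) > 0" if k: "k \<in> {1..Suc n}" for k
  proof -
    have "(-1) ^ (Suc n - k) * (\<Prod>j\<in>{1..n}. y k - x j) > 0"
      using gaps k by (intro sign_prod_diff_in_gap[OF mono k]) auto
    then show ?thesis
      by (simp add: poly_hermite_poly_eq_prod[OF roots] mult.left_commute)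
  qed
  moreover have "hermite_roots (Suc n) {1..Suc n} y"
    using mono' roots' by (simp add: hermite_roots_def strict_mono_on_imp_inj_on)
  ultimately show ?case
    using mono' by auto
qed

lemma pderiv_linear_mult:
  fixes q :: "'a::idom poly"
  shows "pderiv ([:- c, 1:] * q) = [:- c, 1:] * pderiv q + q"
proof -
  have "pderiv [:- c, 1:] = (1 :: 'a poly)"
    by (simp add: pderiv_pCons)
  then show ?thesis
    by (simp only: pderiv_mult mult_1_right)
qed

lemma pderiv2_linear_mult:
  fixes q :: "'a::idom poly"
  shows "pderiv (pderiv ([:- c, 1:] * q)) = [:- c, 1:] * pderiv (pderiv q) + smult 2 (pderiv q)"
proof -
  have "smult 2 p = p + p" for p :: "'a poly"
    by (metis one_add_one smult_add_left smult_1_left)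
  then show ?thesis
    by (simp only: pderiv_linear_mult pderiv_add add.assoc)
qed

lemma poly_pderiv_prod_linear:
  fixes u :: "'b \<Rightarrow> 'a::field"
  assumes "finite I" "\<forall>i\<in>I. x \<noteq> u i"
  shows "poly (pderiv (\<Prod>i\<in>I. [:- u i, 1:])) x = (\<Prod>i\<in>I. x - u i) * (\<Sum>i\<in>I. 1 / (x - u i))"
proof -
  have "poly (pderiv (\<Prod>i\<in>I. [:- u i, 1:])) x = (\<Sum>c\<in>I. \<Prod>i\<in>I - {c}. x - u i)"
    by (simp add: pderiv_prod poly_sum poly_prod pderiv_pCons)
  also have "\<dots> = (\<Sum>c\<in>I. (\<Prod>i\<in>I. x - u i) * (1 / (x - u c)))"
  proof (rule sum.cong)
    fix c assume "c \<in> I"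
    then have "(\<Prod>i\<in>I. x - u i) = (x - u c) * (\<Prod>i\<in>I - {c}. x - u i)" "x - u c \<noteq> 0"
      using assms by (auto simp: prod.remove)
    then show "(\<Prod>i\<in>I - {c}. x - u i) = (\<Prod>i\<in>I. x - u i) * (1 / (x - u c))"
      by simp
  qed simp
  finally show ?thesis
    by (simp add: sum_distrib_left)
qed

lemma poly_pderiv_prod_linear_root:
  fixes u :: "'b \<Rightarrow> 'a::idom"
  assumes "finite I" "a \<in> I"
  shows "poly (pderiv (\<Prod>i\<in>I. [:- u i, 1:])) (u a) = (\<Prod>i\<in>I - {a}. u a - u i)"
  by (simp only: prod.remove[OF assms] pderiv_linear_mult) (simp add: poly_prod)

lemma poly_pderiv2_prod_linear_root:
  fixes u :: "'b \<Rightarrow> 'a::field"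
  assumes "finite I" "inj_on u I" "a \<in> I"
  shows "poly (pderiv (pderiv (\<Prod>i\<in>I. [:- u i, 1:]))) (u a)
           = 2 * (\<Prod>i\<in>I - {a}. u a - u i) * (\<Sum>i\<in>I - {a}. 1 / (u a - u i))"
proof -
  have "\<forall>i\<in>I - {a}. u a \<noteq> u i"
    using assms(2,3) by (auto dest: inj_onD)
  then show ?thesis
    using assms(1)
    by (simp only: prod.remove[OF assms(1,3)] pderiv2_linear_mult)
      (simp add: poly_pderiv_prod_linear)
qed

text \<open>Stieltjes' electrostatic equilibrium: the critical points of
  \<open>log_vandermonde I w - c * (\<Sum>a\<in>I. (w a)\<^sup>2)\<close>.\<close>
definition stieltjes_equilibrium :: "real \<Rightarrow> 'a set \<Rightarrow> ('a \<Rightarrow> real) \<Rightarrow> bool" where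
  "stieltjes_equilibrium c I w \<longleftrightarrow> (\<forall>a\<in>I. (\<Sum>b\<in>I - {a}. 1 / (w a - w b)) = c * w a)"

definition log_vandermonde :: "'a set \<Rightarrow> ('a \<Rightarrow> real) \<Rightarrow> real" where
  "log_vandermonde I w = (\<Sum>a\<in>I. \<Sum>b\<in>I - {a}. ln \<bar>w a - w b\<bar>)"

lemma hermite_roots_equilibrium:
  assumes roots: "hermite_roots n I u"
  shows "stieltjes_equilibrium 1 I u"
  unfolding stieltjes_equilibrium_def
proof
  fix a assume a: "a \<in> I"
  have fin: "finite I" and inj: "inj_on u I" and root: "poly (hermite_poly n) (u a) = 0"
    using roots a by (auto simp: hermite_roots_def)
  define P where "P = (\<Sum>b\<in>I - {a}. 1 / (u a - u b))"
  define D where "D = (\<Prod>b\<in>I - {a}. u a - u b)"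
  have "D \<noteq> 0"
    unfolding D_def using fin inj a by (subst prod_zero_iff) (auto dest: inj_onD)
  have "poly (pderiv (hermite_poly n)) (u a) = 2 ^ n * D"
    by (simp add: hermite_poly_eq_prod[OF roots] pderiv_smult
        poly_pderiv_prod_linear_root[OF fin a] D_def)
  moreover have "poly (pderiv (pderiv (hermite_poly n))) (u a) = 2 ^ n * (2 * D * P)"
    by (simp add: hermite_poly_eq_prod[OF roots] pderiv_smult
        poly_pderiv2_prod_linear_root[OF fin inj a] D_def P_def)
  ultimately show "P = 1 * u a"
    using hermite_poly_ode[of n "u a"] root \<open>D \<noteq> 0\<close> by auto
qed

lemma hermite_roots_prod_diff:
  assumes roots: "hermite_roots n I u" and a: "a \<in> I"
  shows "2 ^ n * (\<Prod>b\<in>I - {a}. u a - u b) = 2 * real n * poly (hermite_poly (n - 1)) (u a)"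
proof -
  have fin: "finite I"
    using roots by (simp add: hermite_roots_def)
  obtain m where n: "n = Suc m"
    using roots a card_0_eq[OF fin] by (cases n) (auto simp: hermite_roots_def)
  have "poly (pderiv (hermite_poly n)) (u a) = 2 ^ n * (\<Prod>b\<in>I - {a}. u a - u b)"
    by (simp add: hermite_poly_eq_prod[OF roots] pderiv_smult poly_pderiv_prod_linear_root[OF fin a])
  then show ?thesis
    by (simp add: n pderiv_hermite_poly algebra_simps)
qed

lemma sum_off_diagonal_swap:
  assumes "finite I"
  shows "(\<Sum>a\<in>I. \<Sum>b\<in>I - {a}. f a b) = (\<Sum>a\<in>I. \<Sum>b\<in>I - {a}. f b a)"
proof -
  have off_diag: "(\<Sum>b\<in>I - {a}. g b) = (\<Sum>b\<in>I. if b = a then 0 else g b)"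
    if "a \<in> I" for a and g :: "'a \<Rightarrow> 'b"
    using assms that by (simp add: sum.If_cases Diff_eq Int_commute)
  have "(\<Sum>a\<in>I. \<Sum>b\<in>I - {a}. f a b) = (\<Sum>a\<in>I. \<Sum>b\<in>I. if b = a then 0 else f a b)"
    by (rule sum.cong) (auto simp: off_diag)
  also have "\<dots> = (\<Sum>b\<in>I. \<Sum>a\<in>I. if b = a then 0 else f a b)"
    by (rule sum.swap)
  also have "\<dots> = (\<Sum>a\<in>I. \<Sum>b\<in>I - {a}. f b a)"
    by (rule sum.cong) (auto simp: off_diag eq_commute)
  finally show ?thesis .
qed

lemma sum_off_diagonal_const:
  fixes I :: "'a set" and c :: real
  shows "(\<Sum>a\<in>I. \<Sum>b\<in>I - {a}. c) = real (card I) * (real (card I) - 1) * c"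
proof (cases "finite I \<and> I \<noteq> {}")
  case True
  then have "(\<Sum>a\<in>I. \<Sum>b\<in>I - {a}. c) = real (card I) * (real (card I - 1) * c)"
    by simp
  also have "real (card I - 1) = real (card I) - 1"
    using True by (simp add: Suc_le_eq card_gt_0_iff)
  finally show ?thesis
    by simp
qed auto

lemma equilibrium_sum_diff_quotients:
  assumes "finite I" "stieltjes_equilibrium c I w"
  shows "(\<Sum>a\<in>I. \<Sum>b\<in>I - {a}. (v a - v b) / (w a - w b)) = 2 * c * (\<Sum>a\<in>I. v a * w a)"
proof -
  \<comment> \<open>No injectivity is needed: if \<open>w a = w b\<close>, all three quotients are \<open>0\<close>.\<close>
  have split: "(v a - v b) / (w a - w b) = v a / (w a - w b) + v b / (w b - w a)" for a b
    by (simp add: diff_divide_distrib) (metis minus_diff_eq divide_minus_right)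
  have "(\<Sum>a\<in>I. \<Sum>b\<in>I - {a}. v a / (w a - w b))
      = (\<Sum>a\<in>I. v a * (\<Sum>b\<in>I - {a}. 1 / (w a - w b)))"
    by (simp add: sum_distrib_left)
  also have "\<dots> = c * (\<Sum>a\<in>I. v a * w a)"
    using assms(2) by (simp add: stieltjes_equilibrium_def sum_distrib_left mult_ac)
  finally have half: "(\<Sum>a\<in>I. \<Sum>b\<in>I - {a}. v a / (w a - w b)) = c * (\<Sum>a\<in>I. v a * w a)" .
  show ?thesis
    using half sum_off_diagonal_swap[OF assms(1), of "\<lambda>a b. v a / (w a - w b)"]
    by (simp add: split sum.distrib)
qed

lemma equilibrium_sum_squares:
  assumes "finite I" "inj_on w I" "stieltjes_equilibrium c I w"
  shows "c * (\<Sum>a\<in>I. (w a)\<^sup>2) = real (card I) * (real (card I) - 1) / 2"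
proof -
  have "(\<Sum>a\<in>I. \<Sum>b\<in>I - {a}. (w a - w b) / (w a - w b)) = (\<Sum>a\<in>I. \<Sum>b\<in>I - {a}. 1)"
    using assms(2) by (intro sum.cong refl) (auto dest: inj_onD)
  also have "\<dots> = real (card I) * (real (card I) - 1)"
    by (simp only: sum_off_diagonal_const mult_1_right)
  finally have "2 * (c * (\<Sum>a\<in>I. w a * w a)) = real (card I) * (real (card I) - 1)"
    using equilibrium_sum_diff_quotients[OF assms(1,3), of w] by (simp only: mult.assoc)
  then show ?thesis
    by (simp add: power2_eq_square)
qed

lemma equilibrium_scale:
  assumes "stieltjes_equilibrium c I u" "s \<noteq> 0"
  shows "stieltjes_equilibrium (c / s\<^sup>2) I (\<lambda>i. s * u i)"
  unfolding stieltjes_equilibrium_def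
proof
  fix a assume "a \<in> I"
  have "(\<Sum>b\<in>I - {a}. 1 / (s * u a - s * u b)) = 1 / s * (\<Sum>b\<in>I - {a}. 1 / (u a - u b))"
    by (simp add: sum_distrib_left flip: right_diff_distrib)
  also have "\<dots> = c / s\<^sup>2 * (s * u a)"
    using assms \<open>a \<in> I\<close> by (simp add: stieltjes_equilibrium_def power2_eq_square)
  finally show "(\<Sum>b\<in>I - {a}. 1 / (s * u a - s * u b)) = c / s\<^sup>2 * (s * u a)" .
qed

lemma log_vandermonde_scale:
  assumes "inj_on u I" "s \<noteq> 0"
  shows "log_vandermonde I (\<lambda>i. s * u i)
           = real (card I) * (real (card I) - 1) * ln \<bar>s\<bar> + log_vandermonde I u"
proof -
  have "ln \<bar>s * u a - s * u b\<bar> = ln \<bar>s\<bar> + ln \<bar>u a - u b\<bar>" if "a \<in> I" "b \<in> I - {a}" for a b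
    using assms that by (auto simp: abs_mult ln_mult dest: inj_onD simp flip: right_diff_distrib)
  then have "log_vandermonde I (\<lambda>i. s * u i) = (\<Sum>a\<in>I. \<Sum>b\<in>I - {a}. ln \<bar>s\<bar> + ln \<bar>u a - u b\<bar>)"
    unfolding log_vandermonde_def by (intro sum.cong refl) auto
  then show ?thesis
    by (simp only: sum.distrib sum_off_diagonal_const log_vandermonde_def)
qed

lemma ln_abs_le_tangent:
  fixes p q :: real
  assumes "p \<noteq> 0" "q \<noteq> 0" "p < 0 \<longleftrightarrow> q < 0"
  shows "ln \<bar>p\<bar> \<le> ln \<bar>q\<bar> + p / q - 1"
proof -
  have pos: "p / q > 0"
    using assms by (auto simp: zero_less_divide_iff)
  then have "\<bar>p\<bar> = p / q * \<bar>q\<bar>"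
    using assms(2) by (metis abs_divide abs_of_pos nonzero_divide_eq_eq abs_eq_0)
  then have "ln \<bar>p\<bar> = ln (p / q) + ln \<bar>q\<bar>"
    using pos assms(2) by (metis ln_mult_pos zero_less_abs_iff)
  with ln_le_minus_one[OF pos] show ?thesis
    by linarith
qed

text \<open>On the ordering chamber of \<open>w\<close> the function
  \<open>log_vandermonde I v - c * (\<Sum>a\<in>I. (v a)\<^sup>2)\<close> is concave, and this is the
  tangent-plane inequality at its critical point \<open>w\<close>.\<close>
lemma log_vandermonde_le_equilibrium:
  assumes fin: "finite I" and inj: "inj_on v I" "inj_on w I" and "c \<ge> 0"
    and same_order: "\<forall>a\<in>I. \<forall>b\<in>I. v a < v b \<longleftrightarrow> w a < w b"
    and equil: "stieltjes_equilibrium c I w"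
  shows "log_vandermonde I v - c * (\<Sum>a\<in>I. (v a)\<^sup>2)
           \<le> log_vandermonde I w - c * (\<Sum>a\<in>I. (w a)\<^sup>2)"
proof -
  define n where "n = real (card I)"
  have "ln \<bar>v a - v b\<bar> \<le> ln \<bar>w a - w b\<bar> + (v a - v b) / (w a - w b) - 1"
    if "a \<in> I" "b \<in> I - {a}" for a b
  proof (rule ln_abs_le_tangent)
    show "v a - v b \<noteq> 0" "w a - w b \<noteq> 0"
      using inj that by (auto dest: inj_onD)
    show "v a - v b < 0 \<longleftrightarrow> w a - w b < 0"
      using same_order that by simp
  qed
  then have "log_vandermonde I v
      \<le> (\<Sum>a\<in>I. \<Sum>b\<in>I - {a}. ln \<bar>w a - w b\<bar> + (v a - v b) / (w a - w b) - 1)"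
    unfolding log_vandermonde_def by (intro sum_mono) auto
  also have "\<dots> = log_vandermonde I w + (\<Sum>a\<in>I. \<Sum>b\<in>I - {a}. (v a - v b) / (w a - w b))
      - (\<Sum>a\<in>I. \<Sum>b\<in>I - {a}. 1)"
    by (simp only: log_vandermonde_def sum.distrib sum_subtractf)
  also have "\<dots> = log_vandermonde I w + 2 * c * (\<Sum>a\<in>I. v a * w a) - n * (n - 1)"
    unfolding equilibrium_sum_diff_quotients[OF fin equil] sum_off_diagonal_const n_def
    by (simp only: mult_1_right)
  also have "\<dots> \<le> log_vandermonde I w + c * (\<Sum>a\<in>I. (v a)\<^sup>2 + (w a)\<^sup>2) - n * (n - 1)"
  proof -
    have "2 * (\<Sum>a\<in>I. v a * w a) \<le> (\<Sum>a\<in>I. (v a)\<^sup>2 + (w a)\<^sup>2)"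
      unfolding sum_distrib_left by (intro sum_mono)
        (simp add: mult.assoc[symmetric] sum_squares_bound)
    then have "c * (2 * (\<Sum>a\<in>I. v a * w a)) \<le> c * (\<Sum>a\<in>I. (v a)\<^sup>2 + (w a)\<^sup>2)"
      using \<open>c \<ge> 0\<close> by (rule mult_left_mono)
    then show ?thesis
      by (simp only: mult.assoc mult.left_commute[of 2 c])
  qed
  also have "\<dots> = log_vandermonde I w + c * (\<Sum>a\<in>I. (v a)\<^sup>2) + c * (\<Sum>a\<in>I. (w a)\<^sup>2)
      - n * (n - 1)"
    by (simp add: sum.distrib distrib_left)
  finally show ?thesis
    using equilibrium_sum_squares[OF fin inj(2) equil] unfolding n_def by linarith
qed

lemma prod_abs_poly_at_roots_swap:
  fixes u y :: "_ \<Rightarrow> 'a::linordered_idom"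
  assumes "\<And>x. poly p x = \<alpha> * (\<Prod>i\<in>I. x - u i)" "\<And>x. poly q x = \<beta> * (\<Prod>k\<in>K. x - y k)"
  shows "\<bar>\<alpha>\<bar> ^ card K * (\<Prod>i\<in>I. \<bar>poly q (u i)\<bar>) = \<bar>\<beta>\<bar> ^ card I * (\<Prod>k\<in>K. \<bar>poly p (y k)\<bar>)"
proof -
  have "(\<Prod>i\<in>I. \<Prod>k\<in>K. \<bar>u i - y k\<bar>) = (\<Prod>k\<in>K. \<Prod>i\<in>I. \<bar>y k - u i\<bar>)"
    by (subst prod.swap) (simp add: abs_minus_commute)
  then show ?thesis
    by (simp add: assms abs_mult abs_prod prod.distrib mult_ac)
qed

lemma prod_abs_hermite_poly_at_roots:
  fixes u :: "nat \<Rightarrow> real"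
  assumes "hermite_roots n I u"
  shows "(\<Prod>a\<in>I. \<bar>poly (hermite_poly (n - 1)) (u a)\<bar>) = (\<Prod>m=1..n-1. (2 * real m) ^ m)"
  using assms
proof (induction n arbitrary: I u)
  case 0
  then show ?case
    by (simp add: hermite_roots_def)
next
  case (Suc n)
  show ?case
  proof (cases "n = 0")
    case True
    then show ?thesis
      by simp
  next
    case False
    then obtain y where y: "hermite_roots n {1..n} y"
      using hermite_roots_exist[of n] by auto
    have card: "card I = Suc n"
      using Suc.prems by (simp add: hermite_roots_def)
    have "(2 ^ Suc n) ^ n * (\<Prod>a\<in>I. \<bar>poly (hermite_poly n) (u a)\<bar>)
        = (2 ^ n) ^ Suc n * (\<Prod>k\<in>{1..n}. \<bar>poly (hermite_poly (Suc n)) (y k)\<bar>)"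
      using prod_abs_poly_at_roots_swap[OF poly_hermite_poly_eq_prod[OF Suc.prems]
          poly_hermite_poly_eq_prod[OF y]] card
      by simp
    then have "(\<Prod>a\<in>I. \<bar>poly (hermite_poly n) (u a)\<bar>)
        = (\<Prod>k\<in>{1..n}. \<bar>poly (hermite_poly (Suc n)) (y k)\<bar>)"
      by (simp flip: power_mult add: mult.commute)
    also have "\<dots> = (\<Prod>k\<in>{1..n}. 2 * real n * \<bar>poly (hermite_poly (n - 1)) (y k)\<bar>)"
    proof (rule prod.cong)
      fix k assume "k \<in> {1..n}"
      then have "poly (hermite_poly n) (y k) = 0"
        using y by (simp add: hermite_roots_def)
      then show "\<bar>poly (hermite_poly (Suc n)) (y k)\<bar> = 2 * real n * \<bar>poly (hermite_poly (n - 1)) (y k)\<bar>"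
        using False by (cases n) (simp_all add: poly_hermite_poly_Suc_Suc abs_mult)
    qed simp
    also have "\<dots> = (2 * real n) ^ n * (\<Prod>m=1..n-1. (2 * real m) ^ m)"
      using Suc.IH[OF y] by (simp add: prod.distrib)
    also have "\<dots> = (\<Prod>m=1..Suc n - 1. (2 * real m) ^ m)"
    proof -
      have "{1..Suc n - 1} = insert n {1..n - 1}"
        using False by auto
      then show ?thesis
        using False by simp
    qed
    finally show ?thesis
      by simp
  qed
qed

lemma log_vandermonde_hermite_roots:
  fixes u :: "nat \<Rightarrow> real"
  assumes roots: "hermite_roots n I u"
  shows "log_vandermonde I u = (\<Sum>j=1..n. real j * ln (real j)) - real n * (real n - 1) / 2 * ln 2"
proof (cases "n = 0")
  case True
  then show ?thesis
    using roots by (simp add: hermite_roots_def log_vandermonde_def)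
next
  case False
  have fin: "finite I" and card: "card I = n"
    using roots by (auto simp: hermite_roots_def)
  have ne: "u a - u b \<noteq> 0" if "a \<in> I" "b \<in> I - {a}" for a b
    using roots that by (auto simp: hermite_roots_def dest: inj_onD)
  have row: "(\<Sum>b\<in>I - {a}. ln \<bar>u a - u b\<bar>)
      = ln 2 + ln (real n) - real n * ln 2 + ln \<bar>poly (hermite_poly (n - 1)) (u a)\<bar>"
    and nz: "poly (hermite_poly (n - 1)) (u a) \<noteq> 0" if a: "a \<in> I" for a
  proof -
    have "(\<Prod>b\<in>I - {a}. u a - u b) \<noteq> 0"
      using fin ne[OF a] by simp
    then show nz: "poly (hermite_poly (n - 1)) (u a) \<noteq> 0"
      using hermite_roots_prod_diff[OF roots a] by auto
    have "(\<Sum>b\<in>I - {a}. ln \<bar>u a - u b\<bar>) = ln \<bar>\<Prod>b\<in>I - {a}. u a - u b\<bar>"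
      unfolding abs_prod using fin ne[OF a] by (subst ln_prod) auto
    also have "\<bar>\<Prod>b\<in>I - {a}. u a - u b\<bar> = 2 * real n * \<bar>poly (hermite_poly (n - 1)) (u a)\<bar> / 2 ^ n"
      using arg_cong[OF hermite_roots_prod_diff[OF roots a], of abs]
      by (simp add: abs_mult field_simps)
    finally show "(\<Sum>b\<in>I - {a}. ln \<bar>u a - u b\<bar>)
        = ln 2 + ln (real n) - real n * ln 2 + ln \<bar>poly (hermite_poly (n - 1)) (u a)\<bar>"
      using False nz by (simp add: ln_div ln_mult ln_realpow)
  qed
  have "log_vandermonde I u
      = (\<Sum>a\<in>I. ln 2 + ln (real n) - real n * ln 2 + ln \<bar>poly (hermite_poly (n - 1)) (u a)\<bar>)"
    unfolding log_vandermonde_def by (intro sum.cong refl) (rule row)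
  also have "\<dots> = real n * (ln 2 + ln (real n) - real n * ln 2)
      + ln (\<Prod>a\<in>I. \<bar>poly (hermite_poly (n - 1)) (u a)\<bar>)"
    using fin nz by (simp add: sum.distrib card ln_prod)
  also have "\<dots> = real n * (ln 2 + ln (real n) - real n * ln 2)
      + ln 2 * (\<Sum>m=1..n-1. real m) + (\<Sum>m=1..n-1. real m * ln (real m))"
    unfolding prod_abs_hermite_poly_at_roots[OF roots]
    by (subst ln_prod) (auto simp: ln_realpow ln_mult sum.distrib sum_distrib_left algebra_simps)
  also have "ln 2 * (\<Sum>m=1..n-1. real m) = ln 2 * (real n * (real n - 1) / 2)"
    using double_gauss_sum_from_Suc_0[of "n - 1", where 'a = real] False by (simp add: mult.commute)
  also have "(\<Sum>m=1..n-1. real m * ln (real m)) = (\<Sum>j=1..n. real j * ln (real j)) - real n * ln (real n)"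
  proof -
    have "{1..n} = insert n {1..n - 1}"
      using False by auto
    then show ?thesis
      using False by simp
  qed
  finally show ?thesis
    by (simp add: field_simps)
qed

lemma hN_squared: "(hN N v)\<^sup>2 = (\<Prod>a\<in>{1..N}. \<Prod>b\<in>{1..N} - {a}. \<bar>v a - v b\<bar>)"
proof (induction N)
  case 0
  then show ?case
    by (simp add: hN_def)
next
  case (Suc N)
  define T where "T = (\<Prod>i\<in>{1..N}. v (Suc N) - v i)"
  have "hN (Suc N) v = hN N v * T"
    by (simp add: hN_def T_def atLeastLessThanSuc_atLeastAtMost)
  have row: "(\<Prod>b\<in>{1..Suc N} - {a}. \<bar>v a - v b\<bar>)
      = \<bar>v a - v (Suc N)\<bar> * (\<Prod>b\<in>{1..N} - {a}. \<bar>v a - v b\<bar>)" if "a \<in> {1..N}" for a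
  proof -
    have "{1..Suc N} - {a} = insert (Suc N) ({1..N} - {a})"
      using that by auto
    then show ?thesis
      by simp
  qed
  have "(\<Prod>a\<in>{1..Suc N}. \<Prod>b\<in>{1..Suc N} - {a}. \<bar>v a - v b\<bar>)
      = (\<Prod>b\<in>{1..N}. \<bar>v (Suc N) - v b\<bar>)
        * (\<Prod>a\<in>{1..N}. \<bar>v a - v (Suc N)\<bar> * (\<Prod>b\<in>{1..N} - {a}. \<bar>v a - v b\<bar>))"
  proof -
    have "{1..Suc N} = insert (Suc N) {1..N}" "{1..Suc N} - {Suc N} = {1..N}"
      by auto
    then show ?thesis
      using row by simp
  qed
  also have "\<dots> = \<bar>T\<bar> * \<bar>T\<bar> * (hN N v)\<^sup>2"
    by (simp add: Suc T_def prod.distrib abs_prod abs_minus_commute)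
  finally show ?case
    using \<open>hN (Suc N) v = hN N v * T\<close> by (simp add: power2_eq_square)
qed

lemma two_ln_abs_hN:
  assumes "inj_on v {1..N}"
  shows "2 * ln \<bar>hN N v\<bar> = log_vandermonde {1..N} v"
proof -
  have ne: "\<bar>v a - v b\<bar> \<noteq> 0" if "a \<in> {1..N}" "b \<in> {1..N} - {a}" for a b
    using assms that by (auto dest: inj_onD)
  have "2 * ln \<bar>hN N v\<bar> = ln (\<bar>hN N v\<bar>\<^sup>2)"
    by (simp only: ln_realpow)
  also have "\<dots> = ln ((hN N v)\<^sup>2)"
    by simp
  also have "\<dots> = (\<Sum>a\<in>{1..N}. ln (\<Prod>b\<in>{1..N} - {a}. \<bar>v a - v b\<bar>))"
    unfolding hN_squared by (rule ln_prod) (use ne in auto)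
  also have "\<dots> = log_vandermonde {1..N} v"
    unfolding log_vandermonde_def using ne by (intro sum.cong refl ln_prod) auto
  finally show ?thesis .
qed

lemma FN_eq_log_vandermonde:
  assumes "inj_on v {1..N}"
  shows "FN N v t = real N / 2 * (real N - 1) * (1 - ln t) - (\<Sum>j=1..N. real j * ln (real j))
           + log_vandermonde {1..N} v - (\<Sum>j=1..N. (v j)\<^sup>2) / (2 * t)"
  by (simp add: FN_def two_ln_abs_hN[OF assms])

lemma FN_le_equilibrium:
  assumes "t > 0" "inj_on v {1..N}" "inj_on w {1..N}"
    and "\<forall>a\<in>{1..N}. \<forall>b\<in>{1..N}. v a < v b \<longleftrightarrow> w a < w b"
    and "stieltjes_equilibrium (1 / (2 * t)) {1..N} w"
  shows "FN N v t \<le> FN N w t"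
  using log_vandermonde_le_equilibrium[OF finite_atLeastAtMost assms(2,3) _ assms(4,5)] assms(1)
  by (simp add: FN_eq_log_vandermonde[OF assms(2)] FN_eq_log_vandermonde[OF assms(3)])

lemma FN_scaled_hermite_roots:
  assumes "t > 0" and roots: "hermite_roots N {1..N} u"
  shows "FN N (\<lambda>i. sqrt (2 * t) * u i) t = 0"
proof -
  define s where "s = sqrt (2 * t)"
  have "s > 0" and s2: "s\<^sup>2 = 2 * t"
    using \<open>t > 0\<close> by (auto simp: s_def)
  have inj: "inj_on u {1..N}"
    using roots by (simp add: hermite_roots_def)
  have inj_s: "inj_on (\<lambda>i. s * u i) {1..N}"
    using inj_on_scale[OF inj] \<open>s > 0\<close> by simp
  have "ln s = (ln 2 + ln t) / 2"
    using \<open>t > 0\<close> by (simp add: s_def ln_sqrt ln_mult)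
  then have log_vdm: "log_vandermonde {1..N} (\<lambda>i. s * u i)
      = real N * (real N - 1) * ((ln 2 + ln t) / 2)
        + (\<Sum>j=1..N. real j * ln (real j)) - real N * (real N - 1) / 2 * ln 2"
    using log_vandermonde_scale[OF inj, of s] log_vandermonde_hermite_roots[OF roots] \<open>s > 0\<close>
    by simp
  have "(\<Sum>j=1..N. (s * u j)\<^sup>2) = s\<^sup>2 * (\<Sum>j=1..N. (u j)\<^sup>2)"
    by (simp add: power_mult_distrib sum_distrib_left)
  also have "\<dots> = 2 * t * (real N * (real N - 1) / 2)"
    using equilibrium_sum_squares[OF finite_atLeastAtMost inj hermite_roots_equilibrium[OF roots]] s2
    by simp
  finally have sum_sq: "(\<Sum>j=1..N. (s * u j)\<^sup>2) / (2 * t) = real N * (real N - 1) / 2"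
    using \<open>t > 0\<close> by (metis less_irrefl mult_eq_0_iff nonzero_mult_div_cancel_left zero_neq_numeral)
  show ?thesis
    unfolding s_def[symmetric] FN_eq_log_vandermonde[OF inj_s] log_vdm sum_sq
    by (simp add: field_simps)
qed

lemma ex_permutes_same_order:
  fixes v :: "nat \<Rightarrow> 'a::linorder"
  assumes inj: "inj_on v {1..N}"
  obtains \<sigma> where "\<sigma> permutes {1..N}" "\<forall>a\<in>{1..N}. \<forall>b\<in>{1..N}. v a < v b \<longleftrightarrow> \<sigma> a < \<sigma> b"
proof -
  define r where "r a = card {k\<in>{1..N}. v k \<le> v a}" for a
  have less: "r a < r b" if "a \<in> {1..N}" "b \<in> {1..N}" "v a < v b" for a b
  proof -
    have "{k\<in>{1..N}. v k \<le> v a} \<subseteq> {k\<in>{1..N}. v k \<le> v b}"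
      using that by auto
    moreover have "b \<in> {k\<in>{1..N}. v k \<le> v b}" "b \<notin> {k\<in>{1..N}. v k \<le> v a}"
      using that by auto
    ultimately show ?thesis
      unfolding r_def by (intro psubset_card_mono) auto
  qed
  have iff: "v a < v b \<longleftrightarrow> r a < r b" if a: "a \<in> {1..N}" and b: "b \<in> {1..N}" for a b
  proof
    show "r a < r b" if "v a < v b"
      using less[OF a b that] .
    show "v a < v b" if "r a < r b"
    proof (rule ccontr)
      assume "\<not> v a < v b"
      then consider "v b < v a" | "v a = v b"
        by fastforce
      then show False
      proof cases
        case 1
        then show False
          using less[OF b a] \<open>r a < r b\<close> by simp
      next
        case 2
        then show False
          using inj_onD[OF inj 2 a b] \<open>r a < r b\<close> by simp
      qed
    qed
  qed
  have "inj_on r {1..N}"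
  proof (rule inj_onI)
    fix a b assume a: "a \<in> {1..N}" and b: "b \<in> {1..N}" and "r a = r b"
    then have "v a = v b"
      using iff[OF a b] iff[OF b a] by (simp add: not_less_iff_gr_or_eq)
    then show "a = b"
      using inj_onD[OF inj _ a b] by simp
  qed
  moreover have "r a \<in> {1..N}" if a: "a \<in> {1..N}" for a
  proof -
    have "a \<in> {k\<in>{1..N}. v k \<le> v a}"
      using a by simp
    then have "0 < r a"
      unfolding r_def by (subst card_gt_0_iff) auto
    moreover have "r a \<le> N"
      unfolding r_def using card_mono[of "{1..N}" "{k\<in>{1..N}. v k \<le> v a}"] by fastforce
    ultimately show ?thesis
      by simp
  qed
  ultimately have "bij_betw r {1..N} {1..N}"
    unfolding bij_betw_def by (meson endo_inj_surj finite_atLeastAtMost image_subsetI)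
  define \<sigma> where "\<sigma> a = (if a \<in> {1..N} then r a else a)" for a
  show ?thesis
  proof (rule that)
    have "bij_betw \<sigma> {1..N} {1..N}"
      using \<open>bij_betw r {1..N} {1..N}\<close> by (rule bij_betw_cong[THEN iffD1, rotated]) (simp add: \<sigma>_def)
    then show "\<sigma> permutes {1..N}"
      by (rule bij_imp_permutes) (auto simp: \<sigma>_def)
    show "\<forall>a\<in>{1..N}. \<forall>b\<in>{1..N}. v a < v b \<longleftrightarrow> \<sigma> a < \<sigma> b"
      using iff by (simp add: \<sigma>_def)
  qed
qed

lemma FN_nonpos:
  assumes "t > 0" and inj: "inj_on v {1..N}"
  shows "FN N v t \<le> 0"
proof (cases "N = 0")
  case True
  then show ?thesis
    by (simp add: FN_def hN_def)
next
  case False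
  then obtain x where mono: "strict_mono_on {1..N} x" and "hermite_roots N {1..N} x"
    using hermite_roots_exist[of N] by auto
  obtain \<sigma> where \<sigma>: "\<sigma> permutes {1..N}"
    and order: "\<forall>a\<in>{1..N}. \<forall>b\<in>{1..N}. v a < v b \<longleftrightarrow> \<sigma> a < \<sigma> b"
    using ex_permutes_same_order[OF inj] by blast
  define w where "w = (\<lambda>i. sqrt (2 * t) * x (\<sigma> i))"
  have roots: "hermite_roots N {1..N} (x \<circ> \<sigma>)"
    by (rule hermite_roots_permute) fact+
  then have "inj_on w {1..N}"
    using inj_on_scale[of "x \<circ> \<sigma>" "{1..N}" "sqrt (2 * t)"] \<open>t > 0\<close>
    by (simp add: w_def hermite_roots_def)
  moreover have "stieltjes_equilibrium (1 / (2 * t)) {1..N} w"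
    using equilibrium_scale[OF hermite_roots_equilibrium[OF roots], of "sqrt (2 * t)"] \<open>t > 0\<close>
    by (simp add: w_def)
  moreover have "\<forall>a\<in>{1..N}. \<forall>b\<in>{1..N}. v a < v b \<longleftrightarrow> w a < w b"
    using order \<open>t > 0\<close> strict_mono_on_less[OF mono] permutes_in_image[OF \<sigma>]
    by (simp add: w_def)
  ultimately have "FN N v t \<le> FN N w t"
    using FN_le_equilibrium[OF \<open>t > 0\<close> inj] by blast
  also have "FN N w t = 0"
    using FN_scaled_hermite_roots[OF \<open>t > 0\<close> roots] by (simp add: w_def)
  finally show ?thesis .
qed

theorem lemma2:
  fixes N :: nat and t :: real
  assumes "N \<ge> 2" and "t > 0"
  shows "(\<forall>v. inj_on v {1..N} \<longrightarrow> FN N v t \<le> 0)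
       \<and> (\<exists>v. inj_on v {1..N} \<and> FN N v t = 0)
       \<and> (\<forall>z \<rho>. strict_mono_on {1..N} z \<and> (\<forall>i\<in>{1..N}. hermite N (z i) = 0)
             \<and> \<rho> permutes {1..N}
             \<longrightarrow> FN N (\<lambda>i. sqrt (2 * t) * z (\<rho> i)) t = 0)"
proof -
  have at_roots: "FN N (\<lambda>i. sqrt (2 * t) * z (\<rho> i)) t = 0"
    if "strict_mono_on {1..N} z" "\<forall>i\<in>{1..N}. hermite N (z i) = 0" "\<rho> permutes {1..N}" for z \<rho>
  proof -
    have "hermite_roots N {1..N} z"
      using that by (simp add: hermite_roots_def hermite_eq_poly_hermite_poly strict_mono_on_imp_inj_on)
    then show ?thesis
      using FN_scaled_hermite_roots[OF \<open>t > 0\<close> hermite_roots_permute[OF _ that(3)]] by simp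
  qed
  obtain x where mono: "strict_mono_on {1..N} x" and roots: "\<forall>i\<in>{1..N}. hermite N (x i) = 0"
    using hermite_roots_exist[of N] assms(1)
    by (auto simp: hermite_roots_def hermite_eq_poly_hermite_poly)
  have "inj_on (\<lambda>i. sqrt (2 * t) * x i) {1..N}"
    using inj_on_scale[OF strict_mono_on_imp_inj_on[OF mono]] \<open>t > 0\<close> by simp
  moreover have "FN N (\<lambda>i. sqrt (2 * t) * x i) t = 0"
    using at_roots[OF mono roots permutes_id] by simp
  ultimately show ?thesis
    using FN_nonpos[OF \<open>t > 0\<close>] at_roots by blast
qed

end
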